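(* If $p=1/2$, then for every $t\ge0$, $$\mathbb{P}(X_t=O)=\sum_{x\in\mathcal{U}_0}\mathbb{P}(X_{t/2}=x)^2.$$
   Context: The simple exclusion process on $\mathbb{Z}$ with parameter $p\in(0,1)$: each site is occupied by at most one particle; each particle attempts to jump one site to the right at rate $p$ and one site to the left at rate $1-p$, an attempt succeeding iff the target site is empty. $O$ is the configuration with every negative site occupied and every non-negative site empty; $\mathcal{U}_0$ is the set of configurations in which the number of particles in $[0,\infty)$ is finite and equal to the number of holes in $(-\infty,0)$ (the set of states reachable from $O$). $\mathbb{P}$ is the law of the process started from $O$, $X_t$ the state at time $t$. *)

theory Defs
  imports "HOL-Analysis.Analysis"
begin

text \<open>Configurations of the simple exclusion process on the integers:
  a configuration maps a site to True iff it is occupied.\<close>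
type_synonym config = "int \<Rightarrow> bool"

definition O_cfg :: config where
  "O_cfg = (\<lambda>i. i < 0)"

definition U0 :: "config set" where
  "U0 = {\<eta>. finite {i. 0 \<le> i \<and> \<eta> i} \<and> finite {i. i < 0 \<and> \<not> \<eta> i} \<and>
             card {i. 0 \<le> i \<and> \<eta> i} = card {i. i < 0 \<and> \<not> \<eta> i}}"

definition sep_rate :: "real \<Rightarrow> config \<Rightarrow> config \<Rightarrow> real" where
  "sep_rate p \<eta> \<eta>' =
     (if \<exists>i. \<eta> i \<and> \<not> \<eta> (i + 1) \<and> \<eta>' = \<eta>(i := False, i + 1 := True) then p else 0)
   + (if \<exists>i. \<eta> i \<and> \<not> \<eta> (i - 1) \<and> \<eta>' = \<eta>(i := False, i - 1 := True) then 1 - p else 0)"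

text \<open>Total exit rate of a configuration (finite for configurations in U0).\<close>
definition sep_exit :: "real \<Rightarrow> config \<Rightarrow> real" where
  "sep_exit p \<eta> = p * real (card {i. \<eta> i \<and> \<not> \<eta> (i + 1)})
                 + (1 - p) * real (card {i. \<eta> i \<and> \<not> \<eta> (i - 1)})"

text \<open>Path weight: probability that the continuous-time chain, started at the head
  of the list, visits exactly the listed states in this order by time t and is in the
  last one at time t.\<close>
primrec path_weight :: "real \<Rightarrow> config list \<Rightarrow> real \<Rightarrow> real" where
  "path_weight p [] = (\<lambda>t. 0)"
| "path_weight p (x # xs) =
     (case xs of
        [] \<Rightarrow> (\<lambda>t. exp (- sep_exit p x * t))
      | y # ys \<Rightarrow> (\<lambda>t. sep_rate p x y *
                      integral {0..t} (\<lambda>s. exp (- sep_exit p x * s) * path_weight p xs (t - s))))"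

text \<open>Transition probability P(X_t = y | X_0 = x) of the (minimal) continuous-time
  Markov chain with the above rates: sum of the weights of all finite jump paths
  from x to y.\<close>
definition sep_trans :: "real \<Rightarrow> real \<Rightarrow> config \<Rightarrow> config \<Rightarrow> real" where
  "sep_trans p t x y =
     (\<Sum>\<^sub>\<infinity> xs \<in> {xs. xs \<noteq> [] \<and> hd xs = x \<and> last xs = y}. path_weight p xs t)"

definition sep_prob :: "real \<Rightarrow> real \<Rightarrow> config \<Rightarrow> real" where
  "sep_prob p t y = sep_trans p t O_cfg y"

end

theory Submission
  imports Defs
begin

(* The transition function sep_trans is a sum of path weights, and a path weight is the
   product of the jump rates along the path times the convolution exp_conv of the
   exponential holding times.  The theorem is the Chapman-Kolmogorov equation at time
   t = t/2 + t/2 from O to O, combined with reversibility for p = 1/2: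
   1. exp_conv satisfies linear ODEs in its first and in its last rate; by uniqueness of
      their solutions it obeys a semigroup identity and is invariant under reversal.
   2. Hence path weights split at every intermediate position, and for p = 1/2 (symmetric
      rates) a path and its reverse have the same weight.
   3. U0 is closed under jumps, and the path weights from a state of U0 sum to at most 1,
      so all sums over paths converge absolutely.
   4. Cutting paths at each position gives Chapman-Kolmogorov; together with reversibility
      and the vanishing of P_t(O, y) for y outside U0 this yields the theorem. *)

(* exp_conv [a_0, ..., a_n] t is the density at time t of a sum of independent exponential
   holding times with rates a_0, ..., a_n (the n-fold convolution of exponentials), i.e.
   the probability of making exactly the jumps of a given path by time t, without the
   jump rates. *)
primrec exp_conv :: "real list \<Rightarrow> real \<Rightarrow> real" where
  "exp_conv [] = (\<lambda>t. 0)"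
| "exp_conv (a # cs) =
     (case cs of
        [] \<Rightarrow> (\<lambda>t. exp (- a * t))
      | b # bs \<Rightarrow> (\<lambda>t. integral {0..t} (\<lambda>s. exp (- a * s) * exp_conv cs (t - s))))"

lemma exp_conv_single [simp]: "exp_conv [a] t = exp (- a * t)"
  by simp

lemma exp_conv_Cons_Cons [simp]:
  "exp_conv (a # b # bs) t = integral {0..t} (\<lambda>s. exp (- a * s) * exp_conv (b # bs) (t - s))"
  by simp

declare exp_conv.simps(2) [simp del]

lemma exp_conv_at_0: "exp_conv cs 0 = (if length cs = 1 then 1 else 0)"
  by (cases cs rule: remdups_adj.cases) auto

lemma integral_reflect_interval:
  "integral {0..t} (h :: real \<Rightarrow> real) = integral {0..t} (\<lambda>r. h (t - r))"
proof -
  have "integral {0..t} h = integral {-t..-0} (\<lambda>x. h (-x))"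
    using Henstock_Kurzweil_Integration.integral_reflect_real[of t 0 h] by simp
  also have "\<dots> = integral {0-t..t-t} (\<lambda>x. (\<lambda>r. h (t - r)) (x + t))"
    by simp
  also have "\<dots> = integral {0..t} (\<lambda>r. h (t - r))"
    by (rule integral_shift_real_ivl)
  finally show ?thesis .
qed

(* Pulling the first exponential out of the convolution integral; this form is what
   makes exp_conv differentiable in t. *)
lemma exp_conv_Cons_Cons_reflected:
  "exp_conv (a # b # bs) t = exp (- a * t) * integral {0..t} (\<lambda>r. exp (a * r) * exp_conv (b # bs) r)"
proof -
  have "exp_conv (a # b # bs) t =
      integral {0..t} (\<lambda>r. exp (- a * (t - r)) * exp_conv (b # bs) (t - (t - r)))"
    by (simp only: exp_conv_Cons_Cons) (rule integral_reflect_interval)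
  also have "\<dots> = integral {0..t} (\<lambda>r. exp (- a * t) * (exp (a * r) * exp_conv (b # bs) r))"
    by (intro integral_cong) (simp add: algebra_simps flip: exp_add)
  also have "\<dots> = exp (- a * t) * integral {0..t} (\<lambda>r. exp (a * r) * exp_conv (b # bs) r)"
    by (rule integral_mult_right)
  finally show ?thesis .
qed

(* Uniqueness for the linear ODE V' = -a V on [0, T]: a solution vanishing at 0 vanishes.
   This is the only analytic tool behind the identities for exp_conv below. *)
lemma linear_ode_zero:
  fixes V :: "real \<Rightarrow> real"
  assumes ode: "\<And>s. 0 \<le> s \<Longrightarrow> s \<le> T \<Longrightarrow> (V has_real_derivative (- a * V s)) (at s within {0..T})"
    and init: "V 0 = 0" and t: "0 \<le> t" "t \<le> T"
  shows "V t = 0"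
proof -
  have "((\<lambda>s. exp (a * s) * V s) has_real_derivative 0) (at x within {0..T})" if "x \<in> {0..T}" for x
    by (rule DERIV_cong[OF DERIV_mult'[OF _ ode]])
       (use that in \<open>auto intro!: derivative_eq_intros simp: algebra_simps\<close>)
  then obtain c where c: "\<forall>x\<in>{0..T}. exp (a * x) * V x = c"
    using has_field_derivative_zero_constant[of "{0..T}"] by blast
  then have "c = 0"
    using init t by force
  then show ?thesis
    using c t by simp
qed

lemma exp_conv_deriv_first:
  "0 \<le> t \<Longrightarrow> t \<le> T \<Longrightarrow>
    (exp_conv (a # cs) has_real_derivative (- a * exp_conv (a # cs) t + exp_conv cs t)) (at t within {0..T})"
proof (induction cs arbitrary: a t)
  case Nil
  show ?case
    by (rule DERIV_subset[where s=UNIV]) (auto intro!: derivative_eq_intros)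
next
  case (Cons b cs)
  define F where "F r = exp (a * r) * exp_conv (b # cs) r" for r
  have "continuous_on {0..T} (exp_conv (b # cs))"
    by (rule DERIV_continuous_on) (rule Cons.IH, auto)
  then have "continuous_on {0..T} F"
    unfolding F_def by (intro continuous_intros)
  then have "((\<lambda>t. integral {0..t} F) has_real_derivative F t) (at t within {0..T})"
    by (rule integral_has_real_derivative) (use Cons.prems in auto)
  moreover have conv_F: "exp_conv (a # b # cs) r = exp (- a * r) * integral {0..r} F" for r
    unfolding F_def by (rule exp_conv_Cons_Cons_reflected)
  moreover have "exp (- a * t) * F t = exp_conv (b # cs) t"
    by (simp add: F_def mult.assoc[symmetric] flip: exp_add)
  ultimately have "((\<lambda>t. exp (- a * t) * integral {0..t} F) has_real_derivative
      - a * exp_conv (a # b # cs) t + exp_conv (b # cs) t) (at t within {0..T})"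
    by (intro DERIV_cong[OF DERIV_mult'[rotated]]) (auto intro!: derivative_eq_intros)
  then show ?case
    by (rule has_field_derivative_transform_within[where d=1]) (use Cons.prems conv_F in auto)
qed

lemma exp_conv_continuous: "continuous_on {0..T} (exp_conv cs)"
proof (cases cs)
  case (Cons a cs')
  show ?thesis
    unfolding Cons by (rule DERIV_continuous_on) (rule exp_conv_deriv_first, auto)
qed simp

(* For a # cs @ [b] the two equations give
   (b - a) exp_conv (a # cs @ [b]) = exp_conv (a # cs) - exp_conv (cs @ [b]) by ODE uniqueness,
   which transfers the first-rate equation to the last rate. *)
lemma exp_conv_deriv_last:
  "0 \<le> t \<Longrightarrow> t \<le> T \<Longrightarrow>
    (exp_conv (cs @ [b]) has_real_derivative (- b * exp_conv (cs @ [b]) t + exp_conv cs t)) (at t within {0..T})"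
proof (induction cs arbitrary: t)
  case Nil
  then show ?case
    using exp_conv_deriv_first[of t T b "[]"] by (simp only: append.simps(1))
next
  case (Cons a cs)
  note d_full = exp_conv_deriv_first[of _ T a "cs @ [b]"]
  have diff: "(b - a) * exp_conv (a # cs @ [b]) s - exp_conv (a # cs) s + exp_conv (cs @ [b]) s = 0"
    if s: "0 \<le> s" "s \<le> T" for s
  proof (rule linear_ode_zero[where a=a and T=T, OF _ _ s])
    fix x assume x: "0 \<le> x" "x \<le> T"
    show "((\<lambda>s. (b - a) * exp_conv (a # cs @ [b]) s - exp_conv (a # cs) s + exp_conv (cs @ [b]) s)
        has_real_derivative - a * ((b - a) * exp_conv (a # cs @ [b]) x - exp_conv (a # cs) x
          + exp_conv (cs @ [b]) x)) (at x within {0..T})"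
      by (rule DERIV_cong[OF DERIV_add[OF DERIV_diff[OF DERIV_cmult[OF d_full[OF x]]
            exp_conv_deriv_first[OF x]] Cons.IH[OF x]]]) (simp add: algebra_simps)
  qed (simp add: exp_conv_at_0)
  show ?case
    using Cons.prems diff[OF Cons.prems]
    by (auto intro!: DERIV_cong[OF d_full[OF Cons.prems]] simp: algebra_simps)
qed

(* Semigroup (Chapman-Kolmogorov) identity for a fixed sequence of rates: during time t + u
   the rates are traversed, and the k-th one is the rate in force at the intermediate time t.
   Both sides solve the last-rate equation in u, with the same value at u = 0. *)
lemma exp_conv_semigroup:
  assumes t: "0 \<le> t" and u: "0 \<le> u"
  shows "exp_conv cs (t + u) = (\<Sum>k<length cs. exp_conv (take (Suc k) cs) t * exp_conv (drop k cs) u)"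
  using u
proof (induction cs arbitrary: u rule: rev_induct)
  case (snoc b cs)
  define c where "c k = exp_conv (take (Suc k) (cs @ [b])) t" for k
  define R where "R v = (\<Sum>k<Suc (length cs). c k * exp_conv (drop k cs @ [b]) v)" for v
  have "exp_conv (cs @ [b]) (t + v) - R v = 0" if v: "0 \<le> v" "v \<le> u" for v
  proof (rule linear_ode_zero[where a=b and T=u, OF _ _ v])
    fix x assume x: "0 \<le> x" "x \<le> u"
    have "(exp_conv (cs @ [b]) has_real_derivative - b * exp_conv (cs @ [b]) (t + x) + exp_conv cs (t + x))
        (at ((\<lambda>v. t + v) x) within (\<lambda>v. t + v) ` {0..u})"
      by (rule DERIV_subset[OF exp_conv_deriv_last[of "t + x" "t + u"]]) (use x t in auto)
    moreover have "((\<lambda>v. t + v) has_real_derivative 1) (at x within {0..u})"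
      by (auto intro!: derivative_eq_intros)
    ultimately have dL: "((\<lambda>v. exp_conv (cs @ [b]) (t + v)) has_real_derivative
        - b * exp_conv (cs @ [b]) (t + x) + exp_conv cs (t + x)) (at x within {0..u})"
      using DERIV_image_chain by (fastforce simp: o_def)
    have "(\<Sum>k<Suc (length cs). c k * (- b * exp_conv (drop k cs @ [b]) x + exp_conv (drop k cs) x))
        = - b * R x + (\<Sum>k<Suc (length cs). c k * exp_conv (drop k cs) x)"
      unfolding R_def sum_distrib_left sum.distrib[symmetric] by (intro sum.cong) (auto simp: algebra_simps)
    also have "(\<Sum>k<Suc (length cs). c k * exp_conv (drop k cs) x) = exp_conv cs (t + x)"
      unfolding snoc.IH[OF x(1)] by (auto simp: c_def intro!: sum.cong)
    finally have "(\<Sum>k<Suc (length cs). c k * (- b * exp_conv (drop k cs @ [b]) x + exp_conv (drop k cs) x))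
        = - b * R x + exp_conv cs (t + x)" .
    moreover have "(R has_real_derivative
        (\<Sum>k<Suc (length cs). c k * (- b * exp_conv (drop k cs @ [b]) x + exp_conv (drop k cs) x)))
        (at x within {0..u})"
      unfolding R_def by (intro DERIV_sum DERIV_cmult exp_conv_deriv_last x)
    ultimately show "((\<lambda>v. exp_conv (cs @ [b]) (t + v) - R v) has_real_derivative
        - b * (exp_conv (cs @ [b]) (t + x) - R x)) (at x within {0..u})"
      by (intro DERIV_cong[OF DERIV_diff[OF dL]]) (auto simp: algebra_simps)
  next
    have "R 0 = c (length cs)"
      unfolding R_def by (simp add: exp_conv_at_0 lessThan_Suc)
    then show "exp_conv (cs @ [b]) (t + 0) - R 0 = 0"
      by (simp add: c_def)
  qed
  then show ?case
    using snoc.prems by (simp add: R_def c_def)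
qed simp

(* The convolution does not depend on the order of the rates: both sides solve the
   same first-rate equation. *)
lemma exp_conv_rev: "0 \<le> t \<Longrightarrow> exp_conv (rev cs) t = exp_conv cs t"
proof (induction cs arbitrary: t)
  case (Cons a cs)
  have "exp_conv (rev cs @ [a]) t - exp_conv (a # cs) t = 0"
  proof (rule linear_ode_zero[where a=a and T=t, OF _ _ Cons.prems order_refl])
    fix x assume x: "0 \<le> x" "x \<le> t"
    show "((\<lambda>s. exp_conv (rev cs @ [a]) s - exp_conv (a # cs) s) has_real_derivative
        - a * (exp_conv (rev cs @ [a]) x - exp_conv (a # cs) x)) (at x within {0..t})"
      by (rule DERIV_cong[OF DERIV_diff[OF exp_conv_deriv_last[OF x] exp_conv_deriv_first[OF x]]])
         (simp add: Cons.IH[OF x(1)] algebra_simps)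
  qed (simp add: exp_conv_at_0)
  then show ?case
    by simp
qed simp

lemma exp_conv_nonneg: "0 \<le> t \<Longrightarrow> 0 \<le> exp_conv cs t"
proof (induction cs arbitrary: t)
  case (Cons a cs)
  show ?case
  proof (cases cs)
    case (Cons b bs)
    have "0 \<le> integral {0..t} (\<lambda>r. exp (a * r) * exp_conv cs r)"
      using Cons.IH by (intro integral_nonneg integrable_continuous_real continuous_intros
          exp_conv_continuous) auto
    then show ?thesis
      unfolding Cons exp_conv_Cons_Cons_reflected[of a b bs t] by simp
  qed simp
qed simp

fun rate_prod :: "real \<Rightarrow> config list \<Rightarrow> real" where
  "rate_prod p (x # y # ys) = sep_rate p x y * rate_prod p (y # ys)"
| "rate_prod p _ = 1"

lemma path_weight_Cons_Cons:
  "path_weight p (x # y # ys) t =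
     sep_rate p x y * integral {0..t} (\<lambda>s. exp (- sep_exit p x * s) * path_weight p (y # ys) (t - s))"
  by simp

lemma path_weight_Cons:
  "zs \<noteq> [] \<Longrightarrow> path_weight p (x # zs) t =
     sep_rate p x (hd zs) * integral {0..t} (\<lambda>s. exp (- sep_exit p x * s) * path_weight p zs (t - s))"
  by (cases zs) simp_all

lemma path_weight_factor: "path_weight p xs t = rate_prod p xs * exp_conv (map (sep_exit p) xs) t"
proof (induction p xs arbitrary: t rule: rate_prod.induct)
  case (1 p x y ys)
  have "path_weight p (x # y # ys) t = sep_rate p x y * integral {0..t}
      (\<lambda>s. rate_prod p (y # ys) * (exp (- sep_exit p x * s) * exp_conv (map (sep_exit p) (y # ys)) (t - s)))"
    unfolding path_weight_Cons_Cons "1.IH" by (simp only: ac_simps)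
  then show ?case
    by (simp only: integral_mult_right) simp
qed simp_all

lemma rate_prod_split:
  "k < length xs \<Longrightarrow> rate_prod p (take (Suc k) xs) * rate_prod p (drop k xs) = rate_prod p xs"
proof (induction p xs arbitrary: k rule: rate_prod.induct)
  case (1 p x y ys)
  then show ?case
    by (cases k) (auto simp: algebra_simps)
qed (auto simp: less_Suc_eq)

lemma path_weight_split:
  assumes "0 \<le> t" "0 \<le> u"
  shows "path_weight p xs (t + u) =
    (\<Sum>k<length xs. path_weight p (take (Suc k) xs) t * path_weight p (drop k xs) u)"
  unfolding path_weight_factor exp_conv_semigroup[OF assms] sum_distrib_left length_map
proof (intro sum.cong refl)
  fix k assume "k \<in> {..<length xs}"
  then have "rate_prod p xs = rate_prod p (take (Suc k) xs) * rate_prod p (drop k xs)"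
    using rate_prod_split by simp
  then show "rate_prod p xs * (exp_conv (take (Suc k) (map (sep_exit p) xs)) t
      * exp_conv (drop k (map (sep_exit p) xs)) u) =
    rate_prod p (take (Suc k) xs) * exp_conv (map (sep_exit p) (take (Suc k) xs)) t *
      (rate_prod p (drop k xs) * exp_conv (map (sep_exit p) (drop k xs)) u)"
    by (simp add: take_map drop_map)
qed

(* For p = 1/2 the dynamics is symmetric: a right jump from x to y is a left jump from y to x. *)
lemma sep_rate_symmetric: "sep_rate (1/2) x y = sep_rate (1/2) y x"
proof -
  have "(\<exists>i. x i \<and> \<not> x (i + 1) \<and> y = x(i := False, i + 1 := True)) \<longleftrightarrow>
        (\<exists>i. y i \<and> \<not> y (i - 1) \<and> x = y(i := False, i - 1 := True))" for x y :: config
  proof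
    assume "\<exists>i. x i \<and> \<not> x (i + 1) \<and> y = x(i := False, i + 1 := True)"
    then obtain i where "x i" "\<not> x (i + 1)" "y = x(i := False, i + 1 := True)"
      by blast
    then show "\<exists>i. y i \<and> \<not> y (i - 1) \<and> x = y(i := False, i - 1 := True)"
      by (intro exI[of _ "i + 1"]) (auto simp: fun_eq_iff)
  next
    assume "\<exists>i. y i \<and> \<not> y (i - 1) \<and> x = y(i := False, i - 1 := True)"
    then obtain i where "y i" "\<not> y (i - 1)" "x = y(i := False, i - 1 := True)"
      by blast
    then show "\<exists>i. x i \<and> \<not> x (i + 1) \<and> y = x(i := False, i + 1 := True)"
      by (intro exI[of _ "i - 1"]) (auto simp: fun_eq_iff)
  qed
  then show ?thesis
    unfolding sep_rate_def by auto
qed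

lemma rate_prod_snoc:
  "xs \<noteq> [] \<Longrightarrow> rate_prod p (xs @ [y]) = rate_prod p xs * sep_rate p (last xs) y"
  by (induction p xs rule: rate_prod.induct) auto

lemma rate_prod_rev: "rate_prod (1/2) (rev xs) = rate_prod (1/2) xs"
proof (induction "1/2 :: real" xs rule: rate_prod.induct)
  case (1 x y ys)
  have "rate_prod (1/2) (rev (x # y # ys)) = rate_prod (1/2) (rev (y # ys)) * sep_rate (1/2) y x"
    using rate_prod_snoc[of "rev (y # ys)" "1/2" x] by (simp add: last_rev)
  also have "\<dots> = rate_prod (1/2) (x # y # ys)"
    using "1" by (simp add: sep_rate_symmetric)
  finally show ?case .
qed simp_all

lemma path_weight_rev: "0 \<le> t \<Longrightarrow> path_weight (1/2) (rev xs) t = path_weight (1/2) xs t"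
  unfolding path_weight_factor rate_prod_rev by (simp add: rev_map[symmetric] exp_conv_rev)

lemma sep_rate_nonneg: "0 \<le> p \<Longrightarrow> p \<le> 1 \<Longrightarrow> 0 \<le> sep_rate p x y"
  unfolding sep_rate_def by auto

lemma rate_prod_nonneg: "0 \<le> p \<Longrightarrow> p \<le> 1 \<Longrightarrow> 0 \<le> rate_prod p xs"
  by (induction p xs rule: rate_prod.induct) (auto intro!: mult_nonneg_nonneg sep_rate_nonneg)

lemma path_weight_nonneg: "0 \<le> p \<Longrightarrow> p \<le> 1 \<Longrightarrow> 0 \<le> t \<Longrightarrow> 0 \<le> path_weight p xs t"
  unfolding path_weight_factor by (intro mult_nonneg_nonneg rate_prod_nonneg exp_conv_nonneg)

definition particles_right :: "config \<Rightarrow> int set" where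
  "particles_right \<eta> = {i. 0 \<le> i \<and> \<eta> i}"

definition holes_left :: "config \<Rightarrow> int set" where
  "holes_left \<eta> = {i. i < 0 \<and> \<not> \<eta> i}"

lemma U0_iff:
  "\<eta> \<in> U0 \<longleftrightarrow> finite (particles_right \<eta>) \<and> finite (holes_left \<eta>) \<and>
     card (particles_right \<eta>) = card (holes_left \<eta>)"
  unfolding U0_def particles_right_def holes_left_def by simp

lemma O_cfg_U0: "O_cfg \<in> U0"
  unfolding U0_def O_cfg_def by simp

lemma charge_sum:
  assumes "finite S" "particles_right \<eta> \<subseteq> S" "holes_left \<eta> \<subseteq> S"
  shows "int (card (particles_right \<eta>)) - int (card (holes_left \<eta>)) =
    (\<Sum>k\<in>S. of_bool (\<eta> k) - of_bool (k < 0))"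
proof -
  have "(\<Sum>k\<in>S. of_bool (\<eta> k) - of_bool (k < 0)) =
      (\<Sum>k\<in>S. of_bool (k \<in> particles_right \<eta>) - (of_bool (k \<in> holes_left \<eta>) :: int))"
    by (intro sum.cong) (auto simp: particles_right_def holes_left_def)
  also have "\<dots> = int (card (S \<inter> particles_right \<eta>)) - int (card (S \<inter> holes_left \<eta>))"
    using assms(1) by (simp add: sum_subtractf sum_of_bool_eq Int_def)
  finally show ?thesis
    using assms by (simp add: Int_absorb1)
qed

(* Moving a particle to an empty site preserves the charge, hence U0. *)
lemma jump_preserves_U0:
  assumes x: "x \<in> U0" and "x i" and "\<not> x j"
  shows "x(i := False, j := True) \<in> U0"
proof -
  define y where "y = x(i := False, j := True)"
  have fin_x: "finite (particles_right x)" "finite (holes_left x)"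
    and card_x: "card (particles_right x) = card (holes_left x)"
    using x by (auto simp: U0_iff)
  have sub_y: "particles_right y \<subseteq> insert j (particles_right x)" "holes_left y \<subseteq> insert i (holes_left x)"
    by (auto simp: y_def particles_right_def holes_left_def)
  then have fin_y: "finite (particles_right y)" "finite (holes_left y)"
    using fin_x finite_subset by auto
  define S where "S = particles_right x \<union> holes_left x \<union> {i, j}"
  have S: "finite S" "i \<in> S" "j \<in> S"
    using fin_x by (auto simp: S_def)
  have y_count: "of_bool (y k) = of_bool (x k) - of_bool (k = i) + (of_bool (k = j) :: int)" for k
    using assms by (auto simp: y_def)
  have "int (card (particles_right y)) - int (card (holes_left y)) =
      (\<Sum>k\<in>S. of_bool (x k) - of_bool (k < 0))"
    using charge_sum[of S y] sub_y S
    by (auto simp: S_def y_count sum.distrib sum_subtractf algebra_simps)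
  also have "\<dots> = int (card (particles_right x)) - int (card (holes_left x))"
    by (rule charge_sum[symmetric]) (use S in \<open>auto simp: S_def\<close>)
  finally show ?thesis
    using card_x fin_y by (simp add: U0_iff flip: y_def)
qed

lemma sep_rate_preserves_U0: "x \<in> U0 \<Longrightarrow> sep_rate p x y \<noteq> 0 \<Longrightarrow> y \<in> U0"
  unfolding sep_rate_def by (auto split: if_splits intro: jump_preserves_U0)

(* A path leaving U0 uses a zero rate, hence has weight 0. *)
lemma path_weight_outside_U0:
  assumes "xs \<noteq> []" "hd xs \<in> U0" "last xs \<notin> U0"
  shows "path_weight p xs t = 0"
proof -
  have "rate_prod p xs = 0"
    using assms by (induction p xs rule: rate_prod.induct) (auto dest: sep_rate_preserves_U0)
  then show ?thesis
    by (simp add: path_weight_factor)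
qed

(* In a configuration of U0 only finitely many particles can jump, so the exit rate is
   the total rate of the (finitely many) possible jumps. *)
lemma right_jumps_finite: "x \<in> U0 \<Longrightarrow> finite {i. x i \<and> \<not> x (i + 1)}"
proof -
  assume x: "x \<in> U0"
  have "{i. x i \<and> \<not> x (i + 1)} \<subseteq> particles_right x \<union> (\<lambda>k. k - 1) ` holes_left x \<union> {-1}"
  proof
    fix i assume "i \<in> {i. x i \<and> \<not> x (i + 1)}"
    then have "i \<in> particles_right x \<or> i = -1 \<or> i + 1 \<in> holes_left x"
      by (auto simp: particles_right_def holes_left_def)
    then show "i \<in> particles_right x \<union> (\<lambda>k. k - 1) ` holes_left x \<union> {-1}"
      by (auto intro: image_eqI[where x="i + 1"])
  qed
  then show ?thesis
    using x by (auto simp: U0_iff intro: finite_subset)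
qed

lemma left_jumps_finite: "x \<in> U0 \<Longrightarrow> finite {i. x i \<and> \<not> x (i - 1)}"
proof -
  assume x: "x \<in> U0"
  have "{i. x i \<and> \<not> x (i - 1)} \<subseteq> particles_right x \<union> (\<lambda>k. k + 1) ` holes_left x"
  proof
    fix i assume "i \<in> {i. x i \<and> \<not> x (i - 1)}"
    then have "i \<in> particles_right x \<or> i - 1 \<in> holes_left x"
      by (auto simp: particles_right_def holes_left_def)
    then show "i \<in> particles_right x \<union> (\<lambda>k. k + 1) ` holes_left x"
      by (auto intro: image_eqI[where x="i - 1"])
  qed
  then show ?thesis
    using x by (auto simp: U0_iff intro: finite_subset)
qed

lemma sum_rates_le_exit:
  assumes p: "0 \<le> p" "p \<le> 1" and x: "x \<in> U0" and Y: "finite Y"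
  shows "(\<Sum>y\<in>Y. sep_rate p x y) \<le> sep_exit p x"
proof -
  define R where "R = {i. x i \<and> \<not> x (i + 1)}"
  define L where "L = {i. x i \<and> \<not> x (i - 1)}"
  define A where "A = (\<lambda>i. x(i := False, i + 1 := True)) ` R"
  define B where "B = (\<lambda>i. x(i := False, i - 1 := True)) ` L"
  have fin: "finite R" "finite L"
    using right_jumps_finite[OF x] left_jumps_finite[OF x] by (simp_all add: R_def L_def)
  have "card (Y \<inter> A) \<le> card A"
    using fin by (intro card_mono) (auto simp: A_def)
  also have "card A \<le> card R"
    unfolding A_def by (rule card_image_le[OF fin(1)])
  finally have card_A: "card (Y \<inter> A) \<le> card R" .
  have "card (Y \<inter> B) \<le> card B"
    using fin by (intro card_mono) (auto simp: B_def)
  also have "card B \<le> card L"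
    unfolding B_def by (rule card_image_le[OF fin(2)])
  finally have card_B: "card (Y \<inter> B) \<le> card L" .
  have "sep_rate p x y = p * of_bool (y \<in> A) + (1 - p) * of_bool (y \<in> B)" for y
    unfolding sep_rate_def A_def B_def R_def L_def by auto
  then have "(\<Sum>y\<in>Y. sep_rate p x y) = p * (\<Sum>y\<in>Y. of_bool (y \<in> A)) + (1 - p) * (\<Sum>y\<in>Y. of_bool (y \<in> B))"
    by (simp add: sum.distrib sum_distrib_left)
  also have "\<dots> = p * real (card (Y \<inter> A)) + (1 - p) * real (card (Y \<inter> B))"
    using Y by (simp add: sum_of_bool_eq Int_def)
  also have "\<dots> \<le> p * real (card R) + (1 - p) * real (card L)"
    using card_A card_B p by (intro add_mono mult_left_mono) auto
  also have "\<dots> = sep_exit p x"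
    by (simp add: sep_exit_def R_def L_def)
  finally show ?thesis .
qed

lemma exp_integral: "0 \<le> (t :: real) \<Longrightarrow> (c :: real) * integral {0..t} (\<lambda>s. exp (- c * s)) = 1 - exp (- c * t)"
proof -
  assume t: "0 \<le> t"
  have "((\<lambda>s. c * exp (- c * s)) has_integral (- exp (- c * t)) - (- exp (- c * 0))) {0..t}"
  proof (rule fundamental_theorem_of_calculus[OF t])
    fix x assume "x \<in> {0..t}"
    have "((\<lambda>s. - exp (- c * s)) has_real_derivative c * exp (- c * x)) (at x within {0..t})"
      by (auto intro!: derivative_eq_intros)
    then show "((\<lambda>s. - exp (- c * s)) has_vector_derivative c * exp (- c * x)) (at x within {0..t})"
      by (simp add: has_real_derivative_iff_has_vector_derivative)
  qed
  then show ?thesis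
    by (simp add: integral_unique flip: integral_mult_right)
qed

lemma path_weight_shift_continuous:
  "continuous_on {0..t} (\<lambda>s. exp (- c * s) * path_weight p zs (t - s))"
proof -
  have "continuous_on {0..t} (\<lambda>s. exp_conv (map (sep_exit p) zs) (t - s))"
    by (rule continuous_on_compose2[OF exp_conv_continuous[of t]]) (auto intro!: continuous_intros)
  then show ?thesis
    unfolding path_weight_factor by (intro continuous_intros)
qed

lemma extension_weight_sum_le:
  assumes p: "0 \<le> p" "p \<le> 1" and t: "0 \<le> t" and G: "finite G" "\<And>zs. zs \<in> G \<Longrightarrow> zs \<noteq> [] \<and> hd zs = y"
    and mass: "\<And>s. 0 \<le> s \<Longrightarrow> s \<le> t \<Longrightarrow> (\<Sum>zs\<in>G. path_weight p zs s) \<le> 1"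
  shows "(\<Sum>zs\<in>G. path_weight p (x # zs) t) \<le> sep_rate p x y * integral {0..t} (\<lambda>s. exp (- sep_exit p x * s))"
proof -
  define g where "g = (\<lambda>zs s. exp (- sep_exit p x * s) * path_weight p zs (t - s))"
  have integrable: "g zs integrable_on {0..t}" for zs
    unfolding g_def by (intro integrable_continuous_real path_weight_shift_continuous)
  have "path_weight p (x # zs) t = sep_rate p x y * integral {0..t} (g zs)" if "zs \<in> G" for zs
    using path_weight_Cons[of zs p x t] G(2)[OF that] by (simp del: path_weight.simps add: g_def)
  then have "(\<Sum>zs\<in>G. path_weight p (x # zs) t) = sep_rate p x y * (\<Sum>zs\<in>G. integral {0..t} (g zs))"
    by (simp add: sum_distrib_left del: path_weight.simps)
  also have "\<dots> = sep_rate p x y * integral {0..t} (\<lambda>s. \<Sum>zs\<in>G. g zs s)"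
    using integral_sum[OF G(1), of g] integrable by simp
  also have "\<dots> \<le> sep_rate p x y * integral {0..t} (\<lambda>s. exp (- sep_exit p x * s))"
  proof (intro mult_left_mono sep_rate_nonneg integral_le p)
    fix s assume s: "s \<in> {0..t}"
    have "(\<Sum>zs\<in>G. g zs s) = exp (- sep_exit p x * s) * (\<Sum>zs\<in>G. path_weight p zs (t - s))"
      by (simp add: g_def sum_distrib_left)
    also have "\<dots> \<le> exp (- sep_exit p x * s)"
      using mass[of "t - s"] s by (simp add: mult_left_le)
    finally show "(\<Sum>zs\<in>G. g zs s) \<le> exp (- sep_exit p x * s)" .
  qed (use integrable_sum[OF G(1) integrable] in \<open>auto intro!: integrable_continuous_real continuous_intros\<close>)
  finally show ?thesis .
qed

(* Summing the previous bound over the second state y, weighted by the rates q(x, y) whose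
   total is at most q(x): all one-step extensions of paths from states of U0 carry total
   weight at most 1 - exp(-q(x) t), the probability of leaving x by time t. *)
lemma extensions_weight_sum_le:
  assumes p: "0 \<le> p" "p \<le> 1" and x: "x \<in> U0" and t: "0 \<le> t"
    and G: "finite G" "\<And>zs. zs \<in> G \<Longrightarrow> zs \<noteq> []"
    and mass: "\<And>y s. y \<in> U0 \<Longrightarrow> 0 \<le> s \<Longrightarrow> s \<le> t \<Longrightarrow>
      (\<Sum>zs\<in>{zs \<in> G. hd zs = y}. path_weight p zs s) \<le> 1"
  shows "(\<Sum>zs\<in>G. path_weight p (x # zs) t) \<le> 1 - exp (- sep_exit p x * t)"
proof -
  define I where "I = integral {0..t} (\<lambda>s. exp (- sep_exit p x * s))"
  have group_le: "(\<Sum>zs\<in>{zs \<in> G. hd zs = y}. path_weight p (x # zs) t) \<le> sep_rate p x y * I" for y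
  proof (cases "y \<in> U0")
    case True
    then show ?thesis
      unfolding I_def using p t G mass by (intro extension_weight_sum_le) auto
  next
    case False
    then have "sep_rate p x y = 0"
      using sep_rate_preserves_U0[OF x] by blast
    then show ?thesis
      using G by (simp add: path_weight_Cons del: path_weight.simps)
  qed
  have "(\<Sum>zs\<in>G. path_weight p (x # zs) t) =
      (\<Sum>y\<in>hd ` G. \<Sum>zs\<in>{zs \<in> G. hd zs = y}. path_weight p (x # zs) t)"
    using G by (intro sum.group[symmetric]) auto
  also have "\<dots> \<le> (\<Sum>y\<in>hd ` G. sep_rate p x y) * I"
    unfolding sum_distrib_right by (intro sum_mono group_le)
  also have "\<dots> \<le> sep_exit p x * I"
    using G x t p
    by (intro mult_right_mono sum_rates_le_exit)
       (auto simp: I_def intro!: integral_nonneg integrable_continuous_real continuous_intros)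
  also have "\<dots> = 1 - exp (- sep_exit p x * t)"
    unfolding I_def using t by (rule exp_integral)
  finally show ?thesis .
qed

(* Paths from a state of U0 carry total weight at most 1 (they describe disjoint events),
   by induction on the path length: the path [x] has weight exp(-q(x) t), the longer ones
   are one-step extensions of shorter paths and are bounded by the previous lemma. *)
lemma weight_sum_le_one_bounded_length:
  assumes p: "0 \<le> p" "p \<le> 1"
  shows "x \<in> U0 \<Longrightarrow> 0 \<le> t \<Longrightarrow> finite F \<Longrightarrow> F \<subseteq> {xs. xs \<noteq> [] \<and> hd xs = x \<and> length xs \<le> N} \<Longrightarrow>
    (\<Sum>xs\<in>F. path_weight p xs t) \<le> 1"
proof (induction N arbitrary: x t F)
  case 0
  then show ?case
    by (subgoal_tac "F = {}") auto
next
  case (Suc N)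
  define w where "w xs = path_weight p xs t" for xs
  define G where "G = tl ` (F - {[x]})"
  have collapse: "xs = x # tl xs" if "xs \<in> F - {[x]}" for xs
    using Suc.prems(4) that by (cases xs) auto
  then have F_rest: "F - {[x]} = Cons x ` G"
    unfolding G_def image_image by (auto simp: image_iff)
  have G: "finite G" "\<And>zs. zs \<in> G \<Longrightarrow> zs \<noteq> [] \<and> length zs \<le> N"
    using Suc.prems(3,4) collapse by (fastforce simp: G_def)+
  have "(\<Sum>xs\<in>F. w xs) = (\<Sum>xs\<in>F \<inter> {[x]}. w xs) + (\<Sum>zs\<in>G. w (x # zs))"
    unfolding sum.Int_Diff[OF Suc.prems(3), of _ "{[x]}"] F_rest by (simp add: sum.reindex)
  also have "(\<Sum>xs\<in>F \<inter> {[x]}. w xs) \<le> exp (- sep_exit p x * t)"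
    using sum_mono2[of "{[x]}" "F \<inter> {[x]}" w] path_weight_nonneg[OF p Suc.prems(2)] by (simp add: w_def)
  also have "(\<Sum>zs\<in>G. w (x # zs)) \<le> 1 - exp (- sep_exit p x * t)"
    unfolding w_def
  proof (rule extensions_weight_sum_le[OF p Suc.prems(1,2) G(1)])
    fix y s assume "y \<in> U0" "0 \<le> s" "s \<le> t"
    then show "(\<Sum>zs\<in>{zs \<in> G. hd zs = y}. path_weight p zs s) \<le> 1"
      using G by (intro Suc.IH) auto
  qed (use G in auto)
  finally show ?case
    by (simp add: w_def)
qed

lemma weights_summable_from_U0:
  assumes "0 \<le> p" "p \<le> 1" "x \<in> U0" "0 \<le> t"
  shows "(\<lambda>xs. path_weight p xs t) summable_on {xs. xs \<noteq> [] \<and> hd xs = x}"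
proof (rule nonneg_bdd_above_summable_on)
  show "bdd_above (sum (\<lambda>xs. path_weight p xs t) ` {F. F \<subseteq> {xs. xs \<noteq> [] \<and> hd xs = x} \<and> finite F})"
  proof (rule bdd_aboveI[of _ 1], clarify)
    fix F :: "config list set" assume "F \<subseteq> {xs. xs \<noteq> [] \<and> hd xs = x}" "finite F"
    then show "(\<Sum>xs\<in>F. path_weight p xs t) \<le> 1"
      using assms by (intro weight_sum_le_one_bounded_length[where N="Max (length ` F)"])
        (auto intro: Max_ge)
  qed
qed (use assms in \<open>auto intro: path_weight_nonneg\<close>)

definition paths :: "config \<Rightarrow> config \<Rightarrow> config list set" where
  "paths x y = {xs. xs \<noteq> [] \<and> hd xs = x \<and> last xs = y}"

lemma sep_trans_paths: "sep_trans p t x y = (\<Sum>\<^sub>\<infinity>xs\<in>paths x y. path_weight p xs t)"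
  unfolding sep_trans_def paths_def by simp

lemma sep_trans_has_sum:
  assumes "0 \<le> p" "p \<le> 1" "x \<in> U0" "0 \<le> t"
  shows "((\<lambda>xs. path_weight p xs t) has_sum sep_trans p t x y) (paths x y)"
proof -
  have "(\<lambda>xs. path_weight p xs t) summable_on paths x y"
    by (rule summable_on_subset_banach[OF weights_summable_from_U0[OF assms]]) (auto simp: paths_def)
  then show ?thesis
    unfolding sep_trans_paths by (rule has_sum_infsum)
qed

lemma sep_trans_outside_U0: "x \<in> U0 \<Longrightarrow> y \<notin> U0 \<Longrightarrow> sep_trans p t x y = 0"
  unfolding sep_trans_paths by (intro infsum_0) (auto simp: paths_def path_weight_outside_U0)

(* Reversibility: for p = 1/2 reversing paths gives P_t(x, y) = P_t(y, x). *)
lemma sep_trans_symmetric: "0 \<le> t \<Longrightarrow> sep_trans (1/2) t y x = sep_trans (1/2) t x y"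
  unfolding sep_trans_paths
  by (rule infsum_reindex_bij_witness[where i=rev and j=rev])
     (auto simp: paths_def path_weight_rev hd_rev last_rev)

(* Cutting a path from x to z at its k-th state y is a bijection between (path, position)
   pairs and pairs of paths x -> y, y -> z glued at y. *)
lemma has_sum_cut_paths:
  "((\<lambda>(xs, k). f (take (Suc k) xs) (drop k xs)) has_sum S) (SIGMA xs:paths x z. {..<length xs}) \<longleftrightarrow>
   ((\<lambda>(y, ys, zs). f ys zs) has_sum S) (SIGMA y:UNIV. paths x y \<times> paths y z)"
proof (rule has_sum_reindex_bij_witness[where j="\<lambda>(xs, k). (xs ! k, take (Suc k) xs, drop k xs)"
      and i="\<lambda>(y, ys, zs). (ys @ tl zs, length ys - 1)"])
  fix a assume "a \<in> (SIGMA xs:paths x z. {..<length xs})"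
  then obtain xs k where a: "a = (xs, k)" and xs: "xs \<in> paths x z" and k: "k < length xs"
    by auto
  have "last (take (Suc k) xs) = xs ! k"
    using take_hd_drop[OF k] hd_drop_conv_nth[OF k] by (metis last_snoc)
  then show "(\<lambda>(xs, k). (xs ! k, take (Suc k) xs, drop k xs)) a \<in> (SIGMA y:UNIV. paths x y \<times> paths y z)"
    using xs k by (auto simp: a paths_def hd_drop_conv_nth last_drop)
  show "(\<lambda>(y, ys, zs). (ys @ tl zs, length ys - 1)) ((\<lambda>(xs, k). (xs ! k, take (Suc k) xs, drop k xs)) a) = a"
    using k by (simp add: a tl_drop flip: drop_Suc)
next
  fix b assume "b \<in> (SIGMA y:UNIV. paths x y \<times> paths y z)"
  then obtain y ys zs where b: "b = (y, ys, zs)" and ys: "ys \<in> paths x y" and zs: "zs \<in> paths y z"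
    by auto
  have ys_ne: "ys \<noteq> []" and zs_ne: "zs \<noteq> []"
    using ys zs by (auto simp: paths_def)
  have "ys @ tl zs = butlast ys @ [last ys] @ tl zs"
    using ys_ne by simp
  also have "[last ys] @ tl zs = zs"
    using ys zs zs_ne by (auto simp: paths_def intro: list.collapse)
  finally have joined: "ys @ tl zs = butlast ys @ zs" .
  have y: "hd zs = y" "last ys = y"
    using ys zs by (auto simp: paths_def)
  define n where "n = length (butlast ys)"
  have n: "length ys - 1 = n"
    by (simp add: n_def)
  have "(butlast ys @ zs) ! n = y" "drop n (butlast ys @ zs) = zs"
    using zs_ne y by (simp_all add: n_def nth_append hd_conv_nth)
  moreover have "take (Suc n) (butlast ys @ zs) = butlast ys @ [hd zs]"
    using zs_ne by (cases zs) (simp_all add: n_def)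
  then have "take (Suc n) (butlast ys @ zs) = ys"
    using ys_ne y by (metis append_butlast_last_id)
  ultimately show "(\<lambda>(xs, k). (xs ! k, take (Suc k) xs, drop k xs)) ((\<lambda>(y, ys, zs). (ys @ tl zs, length ys - 1)) b) = b"
    unfolding b prod.case joined n by (simp only:)
  have "0 < length ys"
    using ys_ne by simp
  moreover have "last (ys @ tl zs) = z"
    unfolding joined using zs zs_ne by (simp add: paths_def)
  ultimately show "(\<lambda>(y, ys, zs). (ys @ tl zs, length ys - 1)) b \<in> (SIGMA xs:paths x z. {..<length xs})"
    using ys by (auto simp: b paths_def simp del: length_greater_0_conv)
qed auto

lemma has_sum_product_nonneg:
  fixes f g :: "_ \<Rightarrow> real"
  assumes f: "(f has_sum a) A" and g: "(g has_sum b) B"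
    and nonneg: "\<And>x. x \<in> A \<Longrightarrow> 0 \<le> f x" "\<And>y. y \<in> B \<Longrightarrow> 0 \<le> g y"
  shows "((\<lambda>(x, y). f x * g y) has_sum a * b) (A \<times> B)"
proof -
  have rows: "((\<lambda>y. (\<lambda>(x, y). f x * g y) (x, y)) has_sum f x * b) B" for x
    using has_sum_cmult_right[OF g] by simp
  have total: "((\<lambda>x. f x * b) has_sum a * b) A"
    by (rule has_sum_cmult_left[OF f])
  have "(\<lambda>(x, y). f x * g y) summable_on A \<times> B"
    using nonneg by (intro summable_on_SigmaI[OF rows has_sum_imp_summable[OF total]]) auto
  then show ?thesis
    using has_sum_SigmaI[OF rows total] by simp
qed

(* Chapman-Kolmogorov equation P_{t+u}(x, z) = sum_y P_t(x, y) P_u(y, z) for the chain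
   started in U0: split every path weight at the intermediate time t, then regroup the
   pieces by the state y occupied at time t using the bijection above. *)
lemma chapman_kolmogorov:
  assumes p: "0 \<le> p" "p \<le> 1" and x: "x \<in> U0" and t: "0 \<le> t" and u: "0 \<le> u"
  shows "((\<lambda>y. sep_trans p t x y * sep_trans p u y z) has_sum sep_trans p (t + u) x z) UNIV"
proof -
  define h where "h = (\<lambda>(xs, k). path_weight p (take (Suc k) xs) t * path_weight p (drop k xs) u)"
  have cuts: "((\<lambda>k. h (xs, k)) has_sum path_weight p xs (t + u)) {..<length xs}" for xs
    by (rule has_sum_finiteI) (simp_all add: h_def path_weight_split[OF t u])
  have total: "((\<lambda>xs. path_weight p xs (t + u)) has_sum sep_trans p (t + u) x z) (paths x z)"
    using sep_trans_has_sum[OF p x] t u by simp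
  have "h summable_on (SIGMA xs:paths x z. {..<length xs})"
    using p t u by (intro summable_on_SigmaI[OF cuts has_sum_imp_summable[OF total]])
      (auto simp: h_def intro!: mult_nonneg_nonneg path_weight_nonneg)
  then have "(h has_sum sep_trans p (t + u) x z) (SIGMA xs:paths x z. {..<length xs})"
    by (rule has_sum_SigmaI[OF cuts total])
  then have pairs: "((\<lambda>(y, ys, zs). path_weight p ys t * path_weight p zs u) has_sum sep_trans p (t + u) x z)
      (SIGMA y:UNIV. paths x y \<times> paths y z)"
    using has_sum_cut_paths[where f="\<lambda>ys zs. path_weight p ys t * path_weight p zs u"]
    by (simp add: h_def)
  have "((\<lambda>(ys, zs). path_weight p ys t * path_weight p zs u) has_sum sep_trans p t x y * sep_trans p u y z)
      (paths x y \<times> paths y z)" for y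
  proof (cases "y \<in> U0")
    case True
    show ?thesis
      using p x True t u
      by (intro has_sum_product_nonneg sep_trans_has_sum) (auto intro: path_weight_nonneg)
  next
    case False
    have "path_weight p ys t = 0" if "ys \<in> paths x y" for ys
      using that x False by (auto simp: paths_def path_weight_outside_U0)
    then show ?thesis
      using sep_trans_outside_U0[OF x False] by (auto intro!: has_sum_0)
  qed
  then show ?thesis
    by (intro has_sum_Sigma'[OF pairs]) simp
qed

theorem lemma3p1:
  fixes t :: real
  assumes "t \<ge> 0"
  shows "sep_prob (1/2) t O_cfg = (\<Sum>\<^sub>\<infinity> x \<in> U0. (sep_prob (1/2) (t/2) x)\<^sup>2)"
proof -
  define s where "s = t / 2"
  have s: "0 \<le> s" "t = s + s"
    using assms by (simp_all add: s_def)
  have "((\<lambda>y. sep_trans (1/2) s O_cfg y * sep_trans (1/2) s y O_cfg) has_sum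
      sep_trans (1/2) (s + s) O_cfg O_cfg) UNIV"
    using s O_cfg_U0 by (intro chapman_kolmogorov) auto
  then have all: "((\<lambda>y. (sep_prob (1/2) s y)\<^sup>2) has_sum sep_prob (1/2) t O_cfg) UNIV"
    using s by (simp add: sep_prob_def sep_trans_symmetric[of s _ O_cfg] power2_eq_square)
  have "((\<lambda>y. (sep_prob (1/2) s y)\<^sup>2) has_sum sep_prob (1/2) t O_cfg) UNIV \<longleftrightarrow>
      ((\<lambda>y. (sep_prob (1/2) s y)\<^sup>2) has_sum sep_prob (1/2) t O_cfg) U0"
    by (rule has_sum_cong_neutral) (auto simp: sep_prob_def sep_trans_outside_U0 O_cfg_U0)
  with all show ?thesis
    by (simp add: infsumI s_def)
qed

end
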